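(* Let $k\ge 0$ and let $G$ be a graph that is $K_\ell$-free for some $\ell\le k+2$. Then $G$ is an interval graph if and only if $G$ is a bar $k$-visibility graph.
   Context: A bar $k$-visibility representation is a finite collection of pairwise disjoint closed horizontal line segments (bars) in the plane; two bars are joined by a line of sight if there is a vertical segment with endpoints on the two bars intersecting at most $k$ other bars. The bar $k$-visibility graph has one vertex per bar, two vertices adjacent iff their bars are joined by a line of sight. An interval graph here is the graph obtained from such a collection of bars where two bars are adjacent whenever some vertical segment joins them, regardless of how many bars it passes through. A graph is $K_\ell$-free if it contains no complete subgraph on $\ell$ vertices. *)

theory Defs
  imports Complex_Main
begin

text \<open>A bar is a closed horizontal segment [left, right] x {height}, encoded as
  (left, right, height) with left < right.\<close>
type_synonym bar = "real \<times> real \<times> real"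

definition bar_left :: "bar \<Rightarrow> real" where "bar_left b = fst b"
definition bar_right :: "bar \<Rightarrow> real" where "bar_right b = fst (snd b)"
definition bar_y :: "bar \<Rightarrow> real" where "bar_y b = snd (snd b)"

definition bar_points :: "bar \<Rightarrow> (real \<times> real) set" where
  "bar_points b = {(x, bar_y b) | x. bar_left b \<le> x \<and> x \<le> bar_right b}"

definition bar_repr :: "'a set \<Rightarrow> ('a \<Rightarrow> bar) \<Rightarrow> bool" where
  "bar_repr V b \<longleftrightarrow>
     (\<forall>v\<in>V. bar_left (b v) < bar_right (b v)) \<and>
     (\<forall>u\<in>V. \<forall>v\<in>V. u \<noteq> v \<longrightarrow> bar_points (b u) \<inter> bar_points (b v) = {})"

definition vseg :: "real \<Rightarrow> real \<Rightarrow> real \<Rightarrow> (real \<times> real) set" where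
  "vseg x y1 y2 = {(x, y) | y. min y1 y2 \<le> y \<and> y \<le> max y1 y2}"

definition k_sight :: "nat \<Rightarrow> 'a set \<Rightarrow> ('a \<Rightarrow> bar) \<Rightarrow> 'a \<Rightarrow> 'a \<Rightarrow> bool" where
  "k_sight k V b u v \<longleftrightarrow>
     (\<exists>x. (x, bar_y (b u)) \<in> bar_points (b u) \<and> (x, bar_y (b v)) \<in> bar_points (b v) \<and>
          card {w \<in> V - {u, v}. vseg x (bar_y (b u)) (bar_y (b v)) \<inter> bar_points (b w) \<noteq> {}} \<le> k)"

definition any_sight :: "('a \<Rightarrow> bar) \<Rightarrow> 'a \<Rightarrow> 'a \<Rightarrow> bool" where
  "any_sight b u v \<longleftrightarrow>
     (\<exists>x. (x, bar_y (b u)) \<in> bar_points (b u) \<and> (x, bar_y (b v)) \<in> bar_points (b v))"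

definition simple_graph :: "'a set \<Rightarrow> ('a \<Rightarrow> 'a \<Rightarrow> bool) \<Rightarrow> bool" where
  "simple_graph V E \<longleftrightarrow> finite V \<and> (\<forall>u v. E u v \<longrightarrow> u \<in> V \<and> v \<in> V \<and> u \<noteq> v \<and> E v u)"

definition bar_k_visibility_graph :: "nat \<Rightarrow> 'a set \<Rightarrow> ('a \<Rightarrow> 'a \<Rightarrow> bool) \<Rightarrow> bool" where
  "bar_k_visibility_graph k V E \<longleftrightarrow>
     (\<exists>b. bar_repr V b \<and> (\<forall>u\<in>V. \<forall>v\<in>V. u \<noteq> v \<longrightarrow> (E u v \<longleftrightarrow> k_sight k V b u v)))"

definition bar_interval_graph :: "'a set \<Rightarrow> ('a \<Rightarrow> 'a \<Rightarrow> bool) \<Rightarrow> bool" where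
  "bar_interval_graph V E \<longleftrightarrow>
     (\<exists>b. bar_repr V b \<and> (\<forall>u\<in>V. \<forall>v\<in>V. u \<noteq> v \<longrightarrow> (E u v \<longleftrightarrow> any_sight b u v)))"

definition K_free :: "nat \<Rightarrow> 'a set \<Rightarrow> ('a \<Rightarrow> 'a \<Rightarrow> bool) \<Rightarrow> bool" where
  "K_free l V E \<longleftrightarrow>
     \<not> (\<exists>S \<subseteq> V. card S = l \<and> (\<forall>u\<in>S. \<forall>v\<in>S. u \<noteq> v \<longrightarrow> E u v))"

end

theory Submission
  imports Defs
begin

text \<open>A vertical line stabs at most \<open>k + 2\<close> bars of either representation: otherwise the
  stabbed bars (interval case), or the \<open>l\<close> lowest of them (visibility case, where a line
  of sight between two of them only crosses lower ones), would form a \<open>K\<^sub>l\<close>.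
  Once the stacks are that thin, every line of sight crosses at most \<open>k\<close> other bars,
  so the same bars represent the graph in both senses.\<close>

definition stabs :: "real \<Rightarrow> bar \<Rightarrow> bool" where
  "stabs x c \<longleftrightarrow> bar_left c \<le> x \<and> x \<le> bar_right c"

definition stack :: "'a set \<Rightarrow> ('a \<Rightarrow> bar) \<Rightarrow> real \<Rightarrow> 'a set" where
  "stack V b x = {w \<in> V. stabs x (b w)}"

definition crossed :: "'a set \<Rightarrow> ('a \<Rightarrow> bar) \<Rightarrow> 'a \<Rightarrow> 'a \<Rightarrow> real \<Rightarrow> 'a set" where
  "crossed V b u v x =
     {w \<in> V - {u, v}. vseg x (bar_y (b u)) (bar_y (b v)) \<inter> bar_points (b w) \<noteq> {}}"

definition is_clique :: "('a \<Rightarrow> 'a \<Rightarrow> bool) \<Rightarrow> 'a set \<Rightarrow> bool" where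
  "is_clique E S \<longleftrightarrow> (\<forall>u\<in>S. \<forall>v\<in>S. u \<noteq> v \<longrightarrow> E u v)"

lemma mem_bar_points:
  "(x, y) \<in> bar_points c \<longleftrightarrow> y = bar_y c \<and> stabs x c"
  by (auto simp: bar_points_def stabs_def)

lemma mem_crossed:
  "w \<in> crossed V b u v x \<longleftrightarrow> w \<in> V - {u, v} \<and> stabs x (b w) \<and>
     min (bar_y (b u)) (bar_y (b v)) \<le> bar_y (b w) \<and> bar_y (b w) \<le> max (bar_y (b u)) (bar_y (b v))"
  by (auto simp: crossed_def bar_points_def vseg_def stabs_def)

lemma any_sight_iff_stabs:
  "any_sight b u v \<longleftrightarrow> (\<exists>x. stabs x (b u) \<and> stabs x (b v))"
  by (simp add: any_sight_def mem_bar_points)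

lemma k_sight_iff_stabs:
  "k_sight k V b u v \<longleftrightarrow>
     (\<exists>x. stabs x (b u) \<and> stabs x (b v) \<and> card (crossed V b u v x) \<le> k)"
  by (simp add: k_sight_def mem_bar_points crossed_def)

lemma k_sight_imp_any_sight: "k_sight k V b u v \<Longrightarrow> any_sight b u v"
  by (auto simp: k_sight_iff_stabs any_sight_iff_stabs)

lemma stabbed_bars_heights_distinct:
  assumes "bar_repr V b" "u \<in> V" "v \<in> V" "u \<noteq> v" "stabs x (b u)" "stabs x (b v)"
  shows "bar_y (b u) \<noteq> bar_y (b v)"
proof
  assume "bar_y (b u) = bar_y (b v)"
  then have "(x, bar_y (b u)) \<in> bar_points (b u) \<inter> bar_points (b v)"
    using assms(5,6) by (simp add: mem_bar_points)
  moreover have "bar_points (b u) \<inter> bar_points (b v) = {}"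
    using assms(1-4) by (simp add: bar_repr_def)
  ultimately show False by blast
qed

lemma K_free_clique_card_less:
  assumes "K_free l V E" "is_clique E S" "S \<subseteq> V" "finite S"
  shows "card S < l"
proof (rule ccontr)
  assume "\<not> card S < l"
  then obtain T where "T \<subseteq> S" "card T = l"
    using obtain_subset_with_card_n by (metis not_less)
  with assms(2,3) have "T \<subseteq> V \<and> card T = l \<and> is_clique E T"
    by (auto simp: is_clique_def)
  with assms(1) show False
    by (auto simp: K_free_def is_clique_def)
qed

lemma exists_lower_subset:
  fixes f :: "'a \<Rightarrow> 'b::linorder"
  assumes "finite A" "l \<le> card A"
  shows "\<exists>S\<subseteq>A. card S = l \<and> (\<forall>a\<in>A. \<forall>s\<in>S. f a < f s \<longrightarrow> a \<in> S)"
  using assms(2)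
proof (induction l)
  case 0
  show ?case by auto
next
  case (Suc l)
  then obtain S where S: "S \<subseteq> A" "card S = l" "\<forall>a\<in>A. \<forall>s\<in>S. f a < f s \<longrightarrow> a \<in> S"
    by auto
  have "finite (A - S)" "A - S \<noteq> {}"
    using assms(1) S(1,2) Suc.prems by (auto dest: card_mono[OF assms(1)])
  then have "Min (f ` (A - S)) \<in> f ` (A - S)"
    by (intro Min_in) auto
  then obtain m where m: "m \<in> A - S" "f m = Min (f ` (A - S))"
    by (metis imageE)
  have m_min: "\<forall>a\<in>A - S. f m \<le> f a"
    using m(2) \<open>finite (A - S)\<close> by simp
  have "finite S"
    using S(1) assms(1) finite_subset by blast
  moreover have "\<forall>a\<in>A. \<forall>s\<in>insert m S. f a < f s \<longrightarrow> a \<in> insert m S"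
    using S(3) m_min by (fastforce simp: not_le[symmetric])
  ultimately show ?case
    using S(1,2) m by (intro exI[of _ "insert m S"]) auto
qed

lemma card_crossed_le:
  assumes "finite V" "u \<in> stack V b x" "v \<in> stack V b x" "u \<noteq> v"
  shows "card (crossed V b u v x) \<le> card (stack V b x) - 2"
proof -
  have "finite (stack V b x)"
    using assms(1) by (simp add: stack_def)
  moreover have "crossed V b u v x \<subseteq> stack V b x - {u, v}"
    by (auto simp: mem_crossed stack_def)
  ultimately have "card (crossed V b u v x) \<le> card (stack V b x - {u, v})"
    by (intro card_mono) auto
  also have "\<dots> = card (stack V b x) - 2"
    using assms(2-4) \<open>finite (stack V b x)\<close> by (simp add: card_Diff_subset)
  finally show ?thesis .
qed

lemma k_sight_iff_any_sight_if_thin_stacks: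
  assumes "finite V" "\<forall>x. card (stack V b x) \<le> k + 2" "u \<in> V" "v \<in> V" "u \<noteq> v"
  shows "k_sight k V b u v \<longleftrightarrow> any_sight b u v"
proof
  assume "any_sight b u v"
  then obtain x where x: "stabs x (b u)" "stabs x (b v)"
    by (auto simp: any_sight_iff_stabs)
  then have "card (crossed V b u v x) \<le> card (stack V b x) - 2"
    using card_crossed_le[OF assms(1)] assms(3-5) by (simp add: stack_def)
  also have "\<dots> \<le> k"
    using assms(2) by (simp add: le_diff_conv)
  finally have "card (crossed V b u v x) \<le> k" .
  with x show "k_sight k V b u v"
    by (auto simp: k_sight_iff_stabs)
qed (rule k_sight_imp_any_sight)

lemma interval_stack_is_clique:
  assumes "\<forall>u\<in>V. \<forall>v\<in>V. u \<noteq> v \<longrightarrow> (E u v \<longleftrightarrow> any_sight b u v)"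
  shows "is_clique E (stack V b x)"
  using assms by (auto simp: is_clique_def stack_def any_sight_iff_stabs)

text \<open>Heights within a stack are distinct, so a crossed bar is strictly lower than
  \<open>p\<close> or \<open>q\<close>.\<close>
lemma crossed_subset_lower_part:
  assumes "bar_repr V b" "S \<subseteq> stack V b x"
    and lower: "\<forall>a\<in>stack V b x. \<forall>s\<in>S. bar_y (b a) < bar_y (b s) \<longrightarrow> a \<in> S"
    and "p \<in> S" "q \<in> S"
  shows "crossed V b p q x \<subseteq> S - {p, q}"
proof
  fix w assume "w \<in> crossed V b p q x"
  then have w: "w \<in> stack V b x" "w \<noteq> p" "w \<noteq> q"
    and below: "bar_y (b w) \<le> max (bar_y (b p)) (bar_y (b q))"
    by (auto simp: mem_crossed stack_def)
  have "bar_y (b w) \<noteq> bar_y (b p)" "bar_y (b w) \<noteq> bar_y (b q)"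
    using stabbed_bars_heights_distinct[OF assms(1)] w assms(2,4,5)
    by (auto simp: stack_def)
  with below have "bar_y (b w) < bar_y (b p) \<or> bar_y (b w) < bar_y (b q)"
    by linarith
  then show "w \<in> S - {p, q}"
    using lower w assms(4,5) by auto
qed

lemma visibility_lower_stack_is_clique:
  assumes "bar_repr V b" "\<forall>u\<in>V. \<forall>v\<in>V. u \<noteq> v \<longrightarrow> (E u v \<longleftrightarrow> k_sight k V b u v)"
    and "S \<subseteq> stack V b x" "finite S" "card S \<le> k + 2"
    and "\<forall>a\<in>stack V b x. \<forall>s\<in>S. bar_y (b a) < bar_y (b s) \<longrightarrow> a \<in> S"
  shows "is_clique E S"
  unfolding is_clique_def
proof (intro ballI impI)
  fix p q assume pq: "p \<in> S" "q \<in> S" "p \<noteq> q"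
  have "card (crossed V b p q x) \<le> card (S - {p, q})"
    using crossed_subset_lower_part[OF assms(1,3,6) pq(1,2)] assms(4)
    by (intro card_mono) auto
  also have "\<dots> \<le> k"
    using pq assms(4,5) by (simp add: card_Diff_subset)
  finally have "k_sight k V b p q"
    using pq assms(3) by (auto simp: k_sight_iff_stabs stack_def)
  then show "E p q"
    using assms(2,3) pq by (auto simp: stack_def)
qed

lemma visibility_stack_card_less:
  assumes "bar_repr V b" "\<forall>u\<in>V. \<forall>v\<in>V. u \<noteq> v \<longrightarrow> (E u v \<longleftrightarrow> k_sight k V b u v)"
    and "finite V" "K_free l V E" "l \<le> k + 2"
  shows "card (stack V b x) < l"
proof (rule ccontr)
  have "finite (stack V b x)"
    using assms(3) by (simp add: stack_def)
  moreover assume "\<not> card (stack V b x) < l"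
  ultimately obtain S where S: "S \<subseteq> stack V b x" "card S = l"
    and lower: "\<forall>a\<in>stack V b x. \<forall>s\<in>S. bar_y (b a) < bar_y (b s) \<longrightarrow> a \<in> S"
    using exists_lower_subset[of "stack V b x" l "\<lambda>w. bar_y (b w)"] by force
  have "finite S"
    using S(1) \<open>finite (stack V b x)\<close> finite_subset by blast
  then have "is_clique E S"
    using visibility_lower_stack_is_clique[OF assms(1,2) S(1)] S(2) lower assms(5) by blast
  then have "card S < l"
    using K_free_clique_card_less[OF assms(4)] S(1) \<open>finite S\<close> by (auto simp: stack_def)
  with S(2) show False by simp
qed

theorem mainTheorem11:
  fixes k :: nat and V :: "'a set" and E :: "'a \<Rightarrow> 'a \<Rightarrow> bool"
  assumes "simple_graph V E"
    and "\<exists>l \<le> k + 2. K_free l V E"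
  shows "bar_interval_graph V E \<longleftrightarrow> bar_k_visibility_graph k V E"
proof -
  obtain l where l: "l \<le> k + 2" "K_free l V E"
    using assms(2) by auto
  have fin: "finite V"
    using assms(1) by (simp add: simple_graph_def)
  have same_graph: "(\<forall>u\<in>V. \<forall>v\<in>V. u \<noteq> v \<longrightarrow> (E u v \<longleftrightarrow> any_sight b u v)) \<longleftrightarrow>
      (\<forall>u\<in>V. \<forall>v\<in>V. u \<noteq> v \<longrightarrow> (E u v \<longleftrightarrow> k_sight k V b u v))"
    if "\<forall>x. card (stack V b x) < l" for b
    using k_sight_iff_any_sight_if_thin_stacks[OF fin] that l(1)
    by (metis less_imp_le_nat order.trans)
  show ?thesis
  proof
    assume "bar_interval_graph V E"
    then obtain b where b: "bar_repr V b" "\<forall>u\<in>V. \<forall>v\<in>V. u \<noteq> v \<longrightarrow> (E u v \<longleftrightarrow> any_sight b u v)"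
      by (auto simp: bar_interval_graph_def)
    have "\<forall>x. card (stack V b x) < l"
      using K_free_clique_card_less[OF l(2) interval_stack_is_clique[OF b(2)]] fin
      by (auto simp: stack_def)
    with b show "bar_k_visibility_graph k V E"
      using same_graph unfolding bar_k_visibility_graph_def by blast
  next
    assume "bar_k_visibility_graph k V E"
    then obtain b where b: "bar_repr V b" "\<forall>u\<in>V. \<forall>v\<in>V. u \<noteq> v \<longrightarrow> (E u v \<longleftrightarrow> k_sight k V b u v)"
      by (auto simp: bar_k_visibility_graph_def)
    have "\<forall>x. card (stack V b x) < l"
      using visibility_stack_card_less[OF b fin l(2,1)] by blast
    with b show "bar_interval_graph V E"
      using same_graph unfolding bar_interval_graph_def by blast
  qed
qed

end
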